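(* Let $\mathbb{X}\subseteq\mathbb{P}^2$ be a $\Bbbk$-configuration of type $(1,2,\dots,s)$ with $s\ge2$. Then there are at most $s+1$ lines in $\mathbb{P}^2$ that contain $s$ points of $\mathbb{X}$.
   Context: $\Bbbk$ is an algebraically closed field. A $\Bbbk$-configuration of type $(d_1,\dots,d_s)$ is a finite set $\mathbb{X}\subseteq\mathbb{P}^2$ for which there exist integers $1\le d_1<\cdots<d_s$, subsets $\mathbb{X}_1,\dots,\mathbb{X}_s$ of $\mathbb{X}$ and distinct lines $\mathbb{L}_1,\dots,\mathbb{L}_s\subseteq\mathbb{P}^2$ such that (1) $\mathbb{X}=\bigcup_{i=1}^s\mathbb{X}_i$; (2) $|\mathbb{X}_i|=d_i$ and $\mathbb{X}_i\subseteq\mathbb{L}_i$ for each $i$; (3) for $1<i\le s$, $\mathbb{L}_i$ contains no point of $\mathbb{X}_j$ for any $j<i$. *)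

theory Defs
  imports "HOL-Computational_Algebra.Polynomial"
begin

definition proj_class :: "'k::field \<times> 'k \<times> 'k \<Rightarrow> ('k \<times> 'k \<times> 'k) set" where
  "proj_class v = (case v of (a, b, d) \<Rightarrow> {(c * a, c * b, c * d) | c. c \<noteq> 0})"

definition P2 :: "('k::field \<times> 'k \<times> 'k) set set" where
  "P2 = {proj_class v | v. v \<noteq> (0, 0, 0)}"

definition proj_line :: "'k::field \<times> 'k \<times> 'k \<Rightarrow> ('k \<times> 'k \<times> 'k) set set" where
  "proj_line n = (case n of (u, v, w) \<Rightarrow>
     {p \<in> P2. \<forall>(x, y, z) \<in> p. u * x + v * y + w * z = 0})"

definition lines_P2 :: "('k::field \<times> 'k \<times> 'k) set set set" where
  "lines_P2 = {proj_line n | n. n \<noteq> (0, 0, 0)}"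

text \<open>k-configuration of type ds = [d_1,...,d_s] (0-indexed here).\<close>

definition k_configuration ::
  "('k::field \<times> 'k \<times> 'k) set set \<Rightarrow> nat list \<Rightarrow> bool" where
  "k_configuration X ds \<longleftrightarrow>
     X \<subseteq> P2 \<and> finite X \<and> ds \<noteq> [] \<and> sorted_wrt (<) ds \<and> (\<forall>d \<in> set ds. 1 \<le> d) \<and>
     (\<exists>Xs Ls.
        X = (\<Union>i < length ds. Xs i) \<and>
        (\<forall>i < length ds. card (Xs i) = ds ! i \<and> Xs i \<subseteq> Ls i \<and> Ls i \<in> lines_P2) \<and>
        inj_on Ls {..< length ds} \<and>
        (\<forall>i < length ds. \<forall>j < i. Ls i \<inter> Xs j = {}))"

end

theory Submission
  imports Defs
begin

text \<open>Write \<open>\<X> = \<X>\<^sub>1 \<union> \<dots> \<union> \<X>\<^sub>s\<close> with \<open>|\<X>\<^sub>i| = i\<close>. Two distinct points lie on at most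
  one line, so a line \<open>L \<noteq> \<L>\<^sub>i\<close> meets \<open>\<X>\<^sub>i\<close> in at most one point, and a line with \<open>s\<close>
  points of \<open>\<X>\<close> must meet every \<open>\<X>\<^sub>i\<close> it is not the support of. If such a line misses
  the single point of \<open>\<X>\<^sub>1\<close>, it is one of \<open>\<L>\<^sub>2, \<dots>, \<L>\<^sub>s\<close>. If it passes through that point,
  it is none of \<open>\<L>\<^sub>2, \<dots>, \<L>\<^sub>s\<close>, hence meets \<open>\<X>\<^sub>2\<close>, and it is determined by the point of
  \<open>\<X>\<^sub>2\<close> it contains: at most two such lines. Altogether at most \<open>(s - 1) + 2\<close> lines.\<close>

lemma proj_class_smult:
  fixes c x y z :: "'k::field"
  assumes "c \<noteq> 0"
  shows "proj_class (c * x, c * y, c * z) = proj_class (x, y, z)"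
  unfolding proj_class_def prod.case
proof (intro set_eqI iffI)
  fix t assume "t \<in> {(d * (c * x), d * (c * y), d * (c * z)) | d. d \<noteq> 0}"
  then obtain d where "t = ((d * c) * x, (d * c) * y, (d * c) * z)" "d \<noteq> 0"
    by (auto simp: mult.assoc)
  then show "t \<in> {(d * x, d * y, d * z) | d. d \<noteq> 0}"
    using assms by auto
next
  fix t assume "t \<in> {(d * x, d * y, d * z) | d. d \<noteq> 0}"
  then obtain d where "t = (d * x, d * y, d * z)" "d \<noteq> 0"
    by blast
  then have "t = ((d / c) * (c * x), (d / c) * (c * y), (d / c) * (c * z))" "d / c \<noteq> 0"
    using assms by auto
  then show "t \<in> {(d * (c * x), d * (c * y), d * (c * z)) | d. d \<noteq> 0}"
    by blast
qed

lemma proj_class_eqI: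
  fixes a1 a2 a3 b1 b2 b3 :: "'k::field"
  assumes "(a1, a2, a3) \<noteq> (0, 0, 0)" "(b1, b2, b3) \<noteq> (0, 0, 0)"
    and "a2 * b3 = a3 * b2" "a3 * b1 = a1 * b3" "a1 * b2 = a2 * b1"
  shows "proj_class (a1, a2, a3) = proj_class (b1, b2, b3)"
proof -
  obtain c where "c \<noteq> 0" "b1 = c * a1" "b2 = c * a2" "b3 = c * a3"
  proof -
    consider "a1 \<noteq> 0" | "a1 = 0" "a2 \<noteq> 0" | "a1 = 0" "a2 = 0" "a3 \<noteq> 0"
      using assms(1) by auto
    then show thesis
    proof cases
      case 1
      show thesis by (rule that[of "b1 / a1"]) (use 1 assms in \<open>auto simp: field_simps\<close>)
    next
      case 2
      show thesis by (rule that[of "b2 / a2"]) (use 2 assms in \<open>auto simp: field_simps\<close>)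
    next
      case 3
      show thesis by (rule that[of "b3 / a3"]) (use 3 assms in \<open>auto simp: field_simps\<close>)
    qed
  qed
  then show ?thesis
    using proj_class_smult by metis
qed

lemma P2_E:
  assumes "P \<in> P2"
  obtains x y z where "(x, y, z) \<noteq> (0, 0, 0)" "P = proj_class (x, y, z)"
  using assms unfolding P2_def by auto

lemma proj_line_subset_P2: "proj_line n \<subseteq> P2"
  unfolding proj_line_def by (auto split: prod.splits)

lemma proj_class_in_proj_line_iff:
  fixes x y z u v w :: "'k::field"
  assumes "(x, y, z) \<noteq> (0, 0, 0)"
  shows "proj_class (x, y, z) \<in> proj_line (u, v, w) \<longleftrightarrow> u * x + v * y + w * z = 0"
proof
  assume "proj_class (x, y, z) \<in> proj_line (u, v, w)"
  moreover have "(x, y, z) \<in> proj_class (x, y, z)"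
    unfolding proj_class_def by (auto intro: exI[of _ 1])
  ultimately show "u * x + v * y + w * z = 0"
    unfolding proj_line_def by fastforce
next
  assume eq: "u * x + v * y + w * z = 0"
  have "u * (c * x) + v * (c * y) + w * (c * z) = 0" for c
    using arg_cong[OF eq, of "(*) c"] by (simp add: algebra_simps)
  moreover have "proj_class (x, y, z) \<in> P2"
    using assms unfolding P2_def by blast
  ultimately show "proj_class (x, y, z) \<in> proj_line (u, v, w)"
    unfolding proj_line_def proj_class_def by auto
qed

lemma proj_line_eqI:
  fixes u v w u' v' w' :: "'k::field"
  assumes "\<And>x y z. (x, y, z) \<noteq> (0, 0, 0) \<Longrightarrow>
             u * x + v * y + w * z = 0 \<longleftrightarrow> u' * x + v' * y + w' * z = 0"
  shows "proj_line (u, v, w) = proj_line (u', v', w')"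
proof (rule set_eqI)
  fix P
  show "P \<in> proj_line (u, v, w) \<longleftrightarrow> P \<in> proj_line (u', v', w')"
  proof (cases "P \<in> P2")
    case True
    then obtain x y z where "(x, y, z) \<noteq> (0, 0, 0)" "P = proj_class (x, y, z)"
      by (rule P2_E)
    then show ?thesis
      using assms proj_class_in_proj_line_iff by metis
  qed (use proj_line_subset_P2 in blast)
qed

lemma proj_line_eq_cross:
  fixes a1 a2 a3 b1 b2 b3 u v w :: "'k::field"
  assumes "(u, v, w) \<noteq> (0, 0, 0)"
    and "(a1, a2, a3) \<noteq> (0, 0, 0)" "(b1, b2, b3) \<noteq> (0, 0, 0)"
    and "proj_class (a1, a2, a3) \<noteq> proj_class (b1, b2, b3)"
    and "proj_class (a1, a2, a3) \<in> proj_line (u, v, w)"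
    and "proj_class (b1, b2, b3) \<in> proj_line (u, v, w)"
  shows "proj_line (u, v, w) = proj_line (a2 * b3 - a3 * b2, a3 * b1 - a1 * b3, a1 * b2 - a2 * b1)"
proof (rule proj_line_eqI)
  define c1 c2 c3 where "c1 = a2 * b3 - a3 * b2" "c2 = a3 * b1 - a1 * b3" "c3 = a1 * b2 - a2 * b1"
  have "(c1, c2, c3) \<noteq> (0, 0, 0)"
    using proj_class_eqI[OF assms(2,3)] assms(4) unfolding c1_c2_c3_def by auto
  have a: "u * a1 + v * a2 + w * a3 = 0" and b: "u * b1 + v * b2 + w * b3 = 0"
    using assms(2,3,5,6) proj_class_in_proj_line_iff by blast+
  fix x y z :: 'k
  \<comment> \<open>\<open>(u, v, w)\<close> is orthogonal to both points, hence parallel to their cross product \<open>c\<close>.\<close>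
  have "c1 * (u * x + v * y + w * z) = u * (c1 * x + c2 * y + c3 * z)"
    and "c2 * (u * x + v * y + w * z) = v * (c1 * x + c2 * y + c3 * z)"
    and "c3 * (u * x + v * y + w * z) = w * (c1 * x + c2 * y + c3 * z)"
    using a b unfolding c1_c2_c3_def by algebra+
  then show "u * x + v * y + w * z = 0 \<longleftrightarrow> c1 * x + c2 * y + c3 * z = 0"
    using assms(1) \<open>(c1, c2, c3) \<noteq> (0, 0, 0)\<close> by auto
qed

lemma lines_P2_E:
  assumes "L \<in> lines_P2"
  obtains u v w where "(u, v, w) \<noteq> (0, 0, 0)" "L = proj_line (u, v, w)"
proof -
  obtain n where "n \<noteq> (0, 0, 0)" "L = proj_line n"
    using assms unfolding lines_P2_def by blast
  then show thesis
    using that by (cases n) auto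
qed

lemma lines_P2_unique:
  assumes "L \<in> lines_P2" "L' \<in> lines_P2"
    and "P \<in> L" "P \<in> L'" "Q \<in> L" "Q \<in> L'" "P \<noteq> Q"
  shows "L = L'"
proof -
  obtain u v w where n: "(u, v, w) \<noteq> (0, 0, 0)" "L = proj_line (u, v, w)"
    using assms(1) by (rule lines_P2_E)
  obtain u' v' w' where n': "(u', v', w') \<noteq> (0, 0, 0)" "L' = proj_line (u', v', w')"
    using assms(2) by (rule lines_P2_E)
  obtain a1 a2 a3 where a: "(a1, a2, a3) \<noteq> (0, 0, 0)" "P = proj_class (a1, a2, a3)"
    using assms(3) n(2) proj_line_subset_P2 P2_E by blast
  obtain b1 b2 b3 where b: "(b1, b2, b3) \<noteq> (0, 0, 0)" "Q = proj_class (b1, b2, b3)"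
    using assms(5) n(2) proj_line_subset_P2 P2_E by blast
  have "L = proj_line (a2 * b3 - a3 * b2, a3 * b1 - a1 * b3, a1 * b2 - a2 * b1)"
    using proj_line_eq_cross[OF n(1) a(1) b(1)] assms(3,5,7) a(2) b(2) n(2) by simp
  moreover have "L' = proj_line (a2 * b3 - a3 * b2, a3 * b1 - a1 * b3, a1 * b2 - a2 * b1)"
    using proj_line_eq_cross[OF n'(1) a(1) b(1)] assms(4,6,7) a(2) b(2) n'(2) by simp
  ultimately show ?thesis
    by simp
qed

lemma card_inter_other_line_le_1:
  assumes "L \<in> lines_P2" "L' \<in> lines_P2" "L \<noteq> L'" "A \<subseteq> L'"
  shows "card (L \<inter> A) \<le> 1"
proof (cases "finite (L \<inter> A)")
  case True
  then show ?thesis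
    using lines_P2_unique[OF assms(1,2)] assms(3,4) by (auto simp: card_le_Suc0_iff_eq)
qed simp

lemma card_inter_UN_less:
  assumes "\<And>i. i < s \<Longrightarrow> card (L \<inter> A i) \<le> 1" and "k < s" "L \<inter> A k = {}"
  shows "card (L \<inter> (\<Union>i<s. A i)) < s"
proof -
  have "card (L \<inter> (\<Union>i<s. A i)) = card (\<Union>i<s. L \<inter> A i)"
    by (simp only: Int_UN_distrib)
  also have "\<dots> \<le> (\<Sum>i<s. card (L \<inter> A i))"
    by (rule card_UN_le) simp
  also have "\<dots> = (\<Sum>i\<in>{..<s} - {k}. card (L \<inter> A i))"
    using sum.remove[of "{..<s}" k "\<lambda>i. card (L \<inter> A i)"] assms(2,3) by simp
  also have "\<dots> \<le> (\<Sum>i\<in>{..<s} - {k}. 1)"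
    by (rule sum_mono) (use assms(1) in auto)
  also have "\<dots> = s - 1"
    using assms(2) by simp
  finally show ?thesis
    using assms(2) by simp
qed

locale upt_configuration =
  fixes s :: nat
    and Xs :: "nat \<Rightarrow> ('k::field \<times> 'k \<times> 'k) set set"
    and Ls :: "nat \<Rightarrow> ('k \<times> 'k \<times> 'k) set set"
  assumes card_Xs: "i < s \<Longrightarrow> card (Xs i) = Suc i"
    and Xs_subset_Ls: "i < s \<Longrightarrow> Xs i \<subseteq> Ls i"
    and Ls_in_lines_P2: "i < s \<Longrightarrow> Ls i \<in> lines_P2"
    and Ls_disjoint_Xs: "j < i \<Longrightarrow> i < s \<Longrightarrow> Ls i \<inter> Xs j = {}"
begin

lemma card_inter_Xs_le_1:
  assumes "L \<in> lines_P2" "i < s" "i = 0 \<or> L \<noteq> Ls i"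
  shows "card (L \<inter> Xs i) \<le> 1"
  using assms(3)
proof
  assume "i = 0"
  have "finite (Xs i)"
    using card_Xs[OF assms(2)] by (simp add: card_ge_0_finite)
  then have "card (L \<inter> Xs i) \<le> card (Xs i)"
    by (simp add: card_mono)
  moreover have "card (Xs i) = 1"
    using card_Xs[OF assms(2)] \<open>i = 0\<close> by simp
  ultimately show ?thesis
    by simp
qed (use assms card_inter_other_line_le_1 Xs_subset_Ls Ls_in_lines_P2 in blast)

lemma full_line_missing_Xs0:
  assumes "0 < s" "L \<in> lines_P2" "card (L \<inter> (\<Union>i<s. Xs i)) = s" "L \<inter> Xs 0 = {}"
  shows "L \<in> Ls ` {1..<s}"
proof (rule ccontr)
  assume "L \<notin> Ls ` {1..<s}"
  then have "card (L \<inter> Xs i) \<le> 1" if "i < s" for i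
    using card_inter_Xs_le_1[OF assms(2) that] that by force
  then show False
    using card_inter_UN_less[where A = Xs, OF _ assms(1,4)] assms(3) by simp
qed

lemma full_line_meets_Xs1:
  assumes "1 < s" "L \<in> lines_P2" "card (L \<inter> (\<Union>i<s. Xs i)) = s" "L \<inter> Xs 0 \<noteq> {}"
  shows "L \<inter> Xs 1 \<noteq> {}"
proof
  assume "L \<inter> Xs 1 = {}"
  have "L \<noteq> Ls i" if "0 < i" "i < s" for i
    using Ls_disjoint_Xs[OF that] assms(4) by auto
  then have "card (L \<inter> Xs i) \<le> 1" if "i < s" for i
    using card_inter_Xs_le_1[OF assms(2) that] that by blast
  then show False
    using card_inter_UN_less[where A = Xs, OF _ assms(1) \<open>L \<inter> Xs 1 = {}\<close>] assms(3) by simp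
qed

lemma full_lines_meeting_Xs0:
  assumes "1 < s"
  defines "F \<equiv> {L \<in> lines_P2. card (L \<inter> (\<Union>i<s. Xs i)) = s \<and> L \<inter> Xs 0 \<noteq> {}}"
  shows "finite F \<and> card F \<le> 2"
proof -
  obtain p where p: "Xs 0 = {p}"
    using card_Xs[of 0] assms(1) by (auto simp: card_Suc_eq)
  have "p \<notin> Xs 1"
    using Ls_disjoint_Xs[of 0 1] Xs_subset_Ls[of 1] assms(1) p by auto
  define pick where "pick L = (SOME q. q \<in> L \<inter> Xs 1)" for L
  have pick: "pick L \<in> L \<inter> Xs 1" if "L \<in> F" for L
  proof -
    have "L \<inter> Xs 1 \<noteq> {}"
      using full_line_meets_Xs1[OF assms(1)] that unfolding F_def by blast
    then show ?thesis
      unfolding pick_def by (rule some_in_eq[THEN iffD2])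
  qed
  \<comment> \<open>a line of \<open>F\<close> is the line through \<open>p\<close> and its chosen point of \<open>Xs 1\<close>\<close>
  have "inj_on pick F"
  proof (rule inj_onI)
    fix L L' assume "L \<in> F" "L' \<in> F" "pick L = pick L'"
    then show "L = L'"
      using lines_P2_unique[of L L' p "pick L"] pick \<open>p \<notin> Xs 1\<close> p unfolding F_def by force
  qed
  moreover have "pick ` F \<subseteq> Xs 1"
    using pick by blast
  moreover have "finite (Xs 1)" "card (Xs 1) = 2"
    using card_Xs[of 1] assms(1) by (simp_all add: card_ge_0_finite)
  ultimately show ?thesis
    using inj_on_finite[of pick F "Xs 1"] card_inj_on_le[of pick F "Xs 1"] by simp
qed

lemma full_lines_bound:
  assumes "1 < s"
  defines "F \<equiv> {L \<in> lines_P2. card (L \<inter> (\<Union>i<s. Xs i)) = s}"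
  shows "finite F \<and> card F \<le> s + 1"
proof -
  define F\<^sub>0 where "F\<^sub>0 = {L \<in> lines_P2. card (L \<inter> (\<Union>i<s. Xs i)) = s \<and> L \<inter> Xs 0 \<noteq> {}}"
  have "F \<subseteq> F\<^sub>0 \<union> Ls ` {1..<s}"
    using full_line_missing_Xs0 assms(1) unfolding F_def F\<^sub>0_def by auto
  moreover have "finite F\<^sub>0" "card F\<^sub>0 \<le> 2"
    using full_lines_meeting_Xs0[OF assms(1)] unfolding F\<^sub>0_def by blast+
  moreover have "card (Ls ` {1..<s}) \<le> s - 1"
    using card_image_le[of "{1..<s}" Ls] by simp
  ultimately have "finite F" "card F \<le> card F\<^sub>0 + card (Ls ` {1..<s})"
    using finite_subset[of F "F\<^sub>0 \<union> Ls ` {1..<s}"] card_mono[of "F\<^sub>0 \<union> Ls ` {1..<s}" F]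
      card_Un_le[of F\<^sub>0 "Ls ` {1..<s}"]
    by auto
  then show ?thesis
    using assms(1) \<open>card F\<^sub>0 \<le> 2\<close> \<open>card (Ls ` {1..<s}) \<le> s - 1\<close> by simp
qed

end

theorem corollary2p8:
  fixes X :: "('k::alg_closed_field \<times> 'k \<times> 'k) set set" and s :: nat
  assumes "s \<ge> 2"
    and "k_configuration X [1..<s+1]"
  shows "finite {L \<in> lines_P2. card (L \<inter> X) = s} \<and>
         card {L \<in> lines_P2. card (L \<inter> X) = s} \<le> s + 1"
proof -
  obtain Xs Ls where X: "X = (\<Union>i<length [1..<s+1]. Xs i)"
    and "\<forall>i<length [1..<s+1]. card (Xs i) = [1..<s+1] ! i \<and> Xs i \<subseteq> Ls i \<and> Ls i \<in> lines_P2"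
    and "\<forall>i<length [1..<s+1]. \<forall>j<i. Ls i \<inter> Xs j = {}"
    using assms(2) unfolding k_configuration_def by blast
  then interpret upt_configuration s Xs Ls
    by unfold_locales (simp_all add: nth_upt del: upt_Suc)
  show ?thesis
    using full_lines_bound assms(1) unfolding X by (simp del: upt_Suc)
qed

end
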